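(* Let $\mathsf{T},\mathsf{U}$ be geometric theories over a set $\mathrm{At}$, and let $R = \{([\varphi]_{\mathsf T},[\psi]_{\mathsf T}) \mid (\varphi\vdash\psi)\in\mathsf T\cup\mathsf U\}$, a binary relation on the frame $\mathrm{Geom}(\mathrm{At})/\mathsf{T}$. Let $\overline{R}$ be the least congruence preorder on $\mathrm{Geom}(\mathrm{At})/\mathsf T$ containing $R$, and $\sim_{\overline R}$ the equivalence it induces. Then $\mathrm{Geom}(\mathrm{At})/(\mathsf T\cup\mathsf U)$ is isomorphic to the quotient of $\mathrm{Geom}(\mathrm{At})/\mathsf T$ by $\sim_{\overline R}$.
   Context: Geometric logic over $\mathrm{At}$: conjunctive formulae $\gamma::=p\mid\mathsf{true}\mid\gamma\wedge\gamma$; $\mathrm{Geom}(\mathrm{At})$ consists of $\bigvee S$ for sets $S$ of conjunctive formulae; $\bigvee_i\varphi_i$ collects all disjuncts; $\varphi\wedge\psi=\bigvee\{\gamma\wedge\gamma'\}$ over disjuncts. For a theory $\mathsf T$ (set of sequents $\varphi\vdash\psi$), $\vdash_{\mathsf T}$ is the least relation closed under: theory axioms; reflexivity; cut; $\varphi\wedge\psi\vdash\varphi$, $\varphi\wedge\psi\vdash\psi$; from $\theta\vdash\varphi$, $\theta\vdash\psi$ infer $\theta\vdash\varphi\wedge\psi$; $\varphi\vdash\mathsf{true}$; from $\varphi_i\vdash\psi$ for all $i$ infer $\bigvee_i\varphi_i\vdash\psi$; $\varphi_i\vdash\bigvee_i\varphi_i$. $\mathrm{Geom}(\mathrm{At})/\mathsf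 T$ is the quotient by mutual derivability, classes $[\varphi]_{\mathsf T}$, ordered by derivability; it is a frame. A congruence preorder on a frame $(L,\leq)$ is a preorder $\preceq$ on $L$ containing $\leq$ such that for every $S\subseteq L$, $\bigvee S\preceq b$ whenever $a\preceq b$ for all $a\in S$, and for every finite $S\subseteq L$, $b\preceq\bigwedge S$ whenever $b\preceq a$ for all $a\in S$. It induces $a\sim b$ iff $a\preceq b$ and $b\preceq a$; the quotient $L/{\sim}$ is ordered by the induced order. *)

theory Defs
  imports Main
begin

datatype 'a conj = CAtom 'a | CTrue | CAnd "'a conj" "'a conj"

text \<open>A geometric formula is a (possibly infinite) set S of conjunctive formulae,
  standing for the disjunction of S.\<close>
type_synonym 'a geom = "'a conj set"

definition gconj :: "'a geom \<Rightarrow> 'a geom \<Rightarrow> 'a geom" where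
  "gconj \<phi> \<psi> = {CAnd \<gamma> \<gamma>' | \<gamma> \<gamma>'. \<gamma> \<in> \<phi> \<and> \<gamma>' \<in> \<psi>}"

definition gtrue :: "'a geom" where
  "gtrue = {CTrue}"

definition gdisj :: "'a geom set \<Rightarrow> 'a geom" where
  "gdisj \<Phi> = \<Union>\<Phi>"

type_synonym 'a gtheory = "('a geom \<times> 'a geom) set"

inductive derives :: "'a gtheory \<Rightarrow> 'a geom \<Rightarrow> 'a geom \<Rightarrow> bool" for T where
  ax: "(\<phi>, \<psi>) \<in> T \<Longrightarrow> derives T \<phi> \<psi>"
| refl: "derives T \<phi> \<phi>"
| cut: "derives T \<phi> \<psi> \<Longrightarrow> derives T \<psi> \<chi> \<Longrightarrow> derives T \<phi> \<chi>"
| conjE1: "derives T (gconj \<phi> \<psi>) \<phi>"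
| conjE2: "derives T (gconj \<phi> \<psi>) \<psi>"
| conjI: "derives T \<theta> \<phi> \<Longrightarrow> derives T \<theta> \<psi> \<Longrightarrow> derives T \<theta> (gconj \<phi> \<psi>)"
| trueI: "derives T \<phi> gtrue"
| disjE: "(\<And>\<phi>. \<phi> \<in> \<Phi> \<Longrightarrow> derives T \<phi> \<psi>) \<Longrightarrow> derives T (gdisj \<Phi>) \<psi>"
| disjI: "\<phi> \<in> \<Phi> \<Longrightarrow> derives T \<phi> (gdisj \<Phi>)"

definition cls :: "'a gtheory \<Rightarrow> 'a geom \<Rightarrow> 'a geom set" where
  "cls T \<phi> = {\<psi>. derives T \<phi> \<psi> \<and> derives T \<psi> \<phi>}"

definition lind :: "'a gtheory \<Rightarrow> 'a geom set set" where
  "lind T = range (cls T)"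

definition lind_le :: "'a gtheory \<Rightarrow> ('a geom set \<times> 'a geom set) set" where
  "lind_le T = {(cls T \<phi>, cls T \<psi>) | \<phi> \<psi>. derives T \<phi> \<psi>}"

definition is_join :: "'b set \<Rightarrow> ('b \<times> 'b) set \<Rightarrow> 'b set \<Rightarrow> 'b \<Rightarrow> bool" where
  "is_join L le S j \<longleftrightarrow> j \<in> L \<and> (\<forall>a\<in>S. (a, j) \<in> le)
      \<and> (\<forall>u\<in>L. (\<forall>a\<in>S. (a, u) \<in> le) \<longrightarrow> (j, u) \<in> le)"

definition is_meet :: "'b set \<Rightarrow> ('b \<times> 'b) set \<Rightarrow> 'b set \<Rightarrow> 'b \<Rightarrow> bool" where
  "is_meet L le S m \<longleftrightarrow> m \<in> L \<and> (\<forall>a\<in>S. (m, a) \<in> le)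
      \<and> (\<forall>u\<in>L. (\<forall>a\<in>S. (u, a) \<in> le) \<longrightarrow> (u, m) \<in> le)"

definition cong_preorder :: "'b set \<Rightarrow> ('b \<times> 'b) set \<Rightarrow> ('b \<times> 'b) set \<Rightarrow> bool" where
  "cong_preorder L le P \<longleftrightarrow>
     P \<subseteq> L \<times> L \<and> (\<forall>a\<in>L. (a, a) \<in> P) \<and> trans P \<and> le \<subseteq> P
     \<and> (\<forall>S b j. S \<subseteq> L \<and> b \<in> L \<and> is_join L le S j \<and> (\<forall>a\<in>S. (a, b) \<in> P) \<longrightarrow> (j, b) \<in> P)
     \<and> (\<forall>S b m. S \<subseteq> L \<and> finite S \<and> b \<in> L \<and> is_meet L le S m \<and> (\<forall>a\<in>S. (b, a) \<in> P)
                 \<longrightarrow> (b, m) \<in> P)"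

definition least_cong_preorder :: "'b set \<Rightarrow> ('b \<times> 'b) set \<Rightarrow> ('b \<times> 'b) set \<Rightarrow> ('b \<times> 'b) set" where
  "least_cong_preorder L le R = \<Inter>{P. cong_preorder L le P \<and> R \<subseteq> P}"

definition pre_class :: "'b set \<Rightarrow> ('b \<times> 'b) set \<Rightarrow> 'b \<Rightarrow> 'b set" where
  "pre_class L P a = {b \<in> L. (a, b) \<in> P \<and> (b, a) \<in> P}"

definition pre_quot :: "'b set \<Rightarrow> ('b \<times> 'b) set \<Rightarrow> 'b set set" where
  "pre_quot L P = pre_class L P ` L"

definition pre_quot_le :: "'b set \<Rightarrow> ('b \<times> 'b) set \<Rightarrow> ('b set \<times> 'b set) set" where
  "pre_quot_le L P = {(pre_class L P a, pre_class L P b) | a b. a \<in> L \<and> b \<in> L \<and> (a, b) \<in> P}"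

text \<open>Order isomorphism (for frames, equivalent to frame isomorphism).\<close>
definition order_iso :: "'b set \<Rightarrow> ('b \<times> 'b) set \<Rightarrow> 'c set \<Rightarrow> ('c \<times> 'c) set \<Rightarrow> bool" where
  "order_iso A leA B leB \<longleftrightarrow> (\<exists>f. bij_betw f A B \<and>
      (\<forall>x\<in>A. \<forall>y\<in>A. (x, y) \<in> leA \<longleftrightarrow> (f x, f y) \<in> leB))"

end

theory Submission
  imports Defs
begin

text \<open>For theories T \<subseteq> T', relate the T-classes of \<phi> and \<psi> whenever \<phi> \<turnstile>_T' \<psi>.
  This is well defined, and it is a congruence preorder on Geom(At)/T: joins and finite meets
  there are the classes of disjunctions and conjunctions, and \<turnstile>_T' obeys the same rules
  for them. For T' = T \<union> U it contains R, and induction on T'-derivations puts it below every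
  congruence preorder containing R, so it is Rbar. The quotient by Rbar and Geom(At)/T' are
  then both presented by geometric formulae ordered by \<turnstile>_T', hence isomorphic.\<close>

lemma
  assumes "cong_preorder L le P"
  shows cong_preorder_refl: "a \<in> L \<Longrightarrow> (a, a) \<in> P"
    and cong_preorder_trans: "(a, b) \<in> P \<Longrightarrow> (b, c) \<in> P \<Longrightarrow> (a, c) \<in> P"
    and cong_preorder_le: "(a, b) \<in> le \<Longrightarrow> (a, b) \<in> P"
    and cong_preorder_join: "S \<subseteq> L \<Longrightarrow> b \<in> L \<Longrightarrow> is_join L le S j \<Longrightarrow>
           (\<And>a. a \<in> S \<Longrightarrow> (a, b) \<in> P) \<Longrightarrow> (j, b) \<in> P"
    and cong_preorder_meet: "S \<subseteq> L \<Longrightarrow> finite S \<Longrightarrow> b \<in> L \<Longrightarrow> is_meet L le S m \<Longrightarrow>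
           (\<And>a. a \<in> S \<Longrightarrow> (b, a) \<in> P) \<Longrightarrow> (b, m) \<in> P"
proof -
  note C = assms[unfolded cong_preorder_def]
  have "\<forall>a\<in>L. (a, a) \<in> P" using C by (elim conjE) assumption
  then show "a \<in> L \<Longrightarrow> (a, a) \<in> P" by blast
  have "trans P" using C by (elim conjE) assumption
  then show "(a, b) \<in> P \<Longrightarrow> (b, c) \<in> P \<Longrightarrow> (a, c) \<in> P" by (rule transD)
  have "le \<subseteq> P" using C by (elim conjE) assumption
  then show "(a, b) \<in> le \<Longrightarrow> (a, b) \<in> P" by blast
  have "\<forall>S b j. S \<subseteq> L \<and> b \<in> L \<and> is_join L le S j \<and> (\<forall>a\<in>S. (a, b) \<in> P) \<longrightarrow> (j, b) \<in> P"
    using C by (elim conjE) assumption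
  then show "S \<subseteq> L \<Longrightarrow> b \<in> L \<Longrightarrow> is_join L le S j \<Longrightarrow>
           (\<And>a. a \<in> S \<Longrightarrow> (a, b) \<in> P) \<Longrightarrow> (j, b) \<in> P"
    by blast
  have "\<forall>S b m. S \<subseteq> L \<and> finite S \<and> b \<in> L \<and> is_meet L le S m \<and> (\<forall>a\<in>S. (b, a) \<in> P)
          \<longrightarrow> (b, m) \<in> P"
    using C by (elim conjE) assumption
  then show "S \<subseteq> L \<Longrightarrow> finite S \<Longrightarrow> b \<in> L \<Longrightarrow> is_meet L le S m \<Longrightarrow>
           (\<And>a. a \<in> S \<Longrightarrow> (b, a) \<in> P) \<Longrightarrow> (b, m) \<in> P"
    by blast
qed

lemma pre_class_eq_iff:
  assumes "preorder_on L P" and "a \<in> L" and "b \<in> L"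
  shows "pre_class L P a = pre_class L P b \<longleftrightarrow> (a, b) \<in> P \<and> (b, a) \<in> P"
proof
  have "a \<in> pre_class L P a"
    using assms by (auto simp: pre_class_def preorder_on_def dest: refl_onD)
  moreover assume "pre_class L P a = pre_class L P b"
  ultimately have "a \<in> pre_class L P b" by simp
  then show "(a, b) \<in> P \<and> (b, a) \<in> P" by (simp add: pre_class_def)
next
  assume "(a, b) \<in> P \<and> (b, a) \<in> P"
  then show "pre_class L P a = pre_class L P b"
    using assms(1) unfolding pre_class_def preorder_on_def by (blast dest: transD)
qed

lemma pre_quot_le_iff:
  assumes "preorder_on L P" and "a \<in> L" and "b \<in> L"
  shows "(pre_class L P a, pre_class L P b) \<in> pre_quot_le L P \<longleftrightarrow> (a, b) \<in> P"
proof
  assume "(pre_class L P a, pre_class L P b) \<in> pre_quot_le L P"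
  then obtain a' b' where "a' \<in> L" "b' \<in> L" "(a', b') \<in> P"
    and "pre_class L P a = pre_class L P a'" "pre_class L P b = pre_class L P b'"
    by (auto simp: pre_quot_le_def)
  then have "(a, a') \<in> P" "(a', b') \<in> P" "(b', b) \<in> P"
    using assms by (simp_all add: pre_class_eq_iff)
  then show "(a, b) \<in> P" using assms(1) unfolding preorder_on_def by (blast dest: transD)
qed (use assms in \<open>auto simp: pre_quot_le_def\<close>)

lemma order_iso_of_common_presentation:
  fixes p :: "'x \<Rightarrow> 'b" and q :: "'x \<Rightarrow> 'c"
  assumes "A = range p" and "B = range q"
    and "\<And>x y. (p x, p y) \<in> leA \<longleftrightarrow> (q x, q y) \<in> leB"
    and "\<And>x y. p x = p y \<longleftrightarrow> q x = q y"
  shows "order_iso A leA B leB"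
proof -
  define f where "f = q \<circ> inv p"
  have f_p: "f (p x) = q x" for x
    using assms(4) f_inv_into_f[of "p x" p UNIV] by (simp add: f_def)
  have "bij_betw f A B"
    unfolding bij_betw_def inj_on_def assms(1,2) by (auto simp: f_p assms(4) image_image)
  moreover have "\<forall>x\<in>A. \<forall>y\<in>A. (x, y) \<in> leA \<longleftrightarrow> (f x, f y) \<in> leB"
    unfolding assms(1) by (auto simp: f_p assms(3))
  ultimately show ?thesis unfolding order_iso_def by blast
qed

lemma derives_mono:
  assumes "derives T \<phi> \<psi>" and "T \<subseteq> T'"
  shows "derives T' \<phi> \<psi>"
  using assms
proof (induction rule: derives.induct)
  case (ax \<phi> \<psi>)
  then show ?case by (blast intro: derives.ax)
next
  case (disjE \<Phi> \<psi>)
  then show ?case by (blast intro: derives.disjE)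
qed (auto intro: derives.intros)

lemma derives_gconj_iff:
  "derives T \<theta> (gconj \<phi> \<psi>) \<longleftrightarrow> derives T \<theta> \<phi> \<and> derives T \<theta> \<psi>"
  by (meson derives.conjI derives.cut derives.conjE1 derives.conjE2)

lemma cls_eq_iff: "cls T \<phi> = cls T \<psi> \<longleftrightarrow> derives T \<phi> \<psi> \<and> derives T \<psi> \<phi>"
proof
  assume "cls T \<phi> = cls T \<psi>"
  moreover have "\<psi> \<in> cls T \<psi>" by (simp add: cls_def derives.refl)
  ultimately have "\<psi> \<in> cls T \<phi>" by simp
  then show "derives T \<phi> \<psi> \<and> derives T \<psi> \<phi>" by (simp add: cls_def)
next
  assume "derives T \<phi> \<psi> \<and> derives T \<psi> \<phi>"
  then show "cls T \<phi> = cls T \<psi>" unfolding cls_def by (blast intro: derives.cut)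
qed

lemma mem_cls_iff: "\<phi> \<in> cls T \<psi> \<longleftrightarrow> cls T \<phi> = cls T \<psi>"
  unfolding cls_eq_iff by (simp add: cls_def) blast

lemma subset_lind_eq_image_cls:
  assumes "S \<subseteq> lind T"
  shows "S = cls T ` \<Union>S"
proof (intro equalityI subsetI)
  fix s
  assume "s \<in> S"
  then obtain \<psi> where "s = cls T \<psi>" using assms by (auto simp: lind_def)
  moreover have "\<psi> \<in> cls T \<psi>" by (simp add: mem_cls_iff)
  ultimately show "s \<in> cls T ` \<Union>S" using \<open>s \<in> S\<close> by blast
next
  fix x
  assume "x \<in> cls T ` \<Union>S"
  then obtain s \<phi> where "s \<in> S" "\<phi> \<in> s" "x = cls T \<phi>" by blast
  moreover obtain \<psi> where "s = cls T \<psi>" using \<open>s \<in> S\<close> assms by (auto simp: lind_def)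
  ultimately show "x \<in> S" by (simp add: mem_cls_iff)
qed

definition derives_rel :: "'a gtheory \<Rightarrow> 'a gtheory \<Rightarrow> ('a geom set \<times> 'a geom set) set" where
  "derives_rel T T' = {(cls T \<phi>, cls T \<psi>) | \<phi> \<psi>. derives T' \<phi> \<psi>}"

lemma derives_rel_cls_iff:
  assumes "T \<subseteq> T'"
  shows "(cls T \<phi>, cls T \<psi>) \<in> derives_rel T T' \<longleftrightarrow> derives T' \<phi> \<psi>"
proof
  assume "(cls T \<phi>, cls T \<psi>) \<in> derives_rel T T'"
  then obtain \<phi>' \<psi>' where "cls T \<phi> = cls T \<phi>'" "cls T \<psi> = cls T \<psi>'" "derives T' \<phi>' \<psi>'"
    by (auto simp: derives_rel_def)
  moreover from this have "derives T \<phi> \<phi>'" "derives T \<psi>' \<psi>"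
    by (simp_all add: cls_eq_iff)
  then have "derives T' \<phi> \<phi>'" "derives T' \<psi>' \<psi>"
    using assms by (simp_all add: derives_mono)
  ultimately show "derives T' \<phi> \<psi>" by (blast intro: derives.cut)
qed (auto simp: derives_rel_def)

lemma lind_le_eq_derives_rel: "lind_le T = derives_rel T T"
  by (simp add: lind_le_def derives_rel_def)

lemma lind_le_cls_iff: "(cls T \<phi>, cls T \<psi>) \<in> lind_le T \<longleftrightarrow> derives T \<phi> \<psi>"
  by (simp add: lind_le_eq_derives_rel derives_rel_cls_iff)

lemma lind_le_subset_derives_rel:
  assumes "T \<subseteq> T'"
  shows "lind_le T \<subseteq> derives_rel T T'"
  using assms by (auto simp: lind_le_def derives_rel_def intro: derives_mono)

lemma derives_rel_trans:
  assumes "T \<subseteq> T'" and "(x, y) \<in> derives_rel T T'" and "(y, z) \<in> derives_rel T T'"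
  shows "(x, z) \<in> derives_rel T T'"
proof -
  obtain \<phi> \<psi> \<chi> where "x = cls T \<phi>" "y = cls T \<psi>" "z = cls T \<chi>"
    using assms(2,3) by (auto simp: derives_rel_def)
  with assms show ?thesis
    by (auto simp: derives_rel_cls_iff intro: derives.cut)
qed

lemma preorder_on_derives_rel:
  assumes "T \<subseteq> T'"
  shows "preorder_on (lind T) (derives_rel T T')"
  unfolding preorder_on_def refl_on_def
proof (intro HOL.conjI ballI transI)
  show "derives_rel T T' \<subseteq> lind T \<times> lind T"
    by (auto simp: derives_rel_def lind_def)
  show "(a, a) \<in> derives_rel T T'" if "a \<in> lind T" for a
    using that by (auto simp: lind_def derives_rel_def intro: derives.refl)
  show "(x, z) \<in> derives_rel T T'" if "(x, y) \<in> derives_rel T T'" "(y, z) \<in> derives_rel T T'"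
    for x y z
    using derives_rel_trans[OF assms that] .
qed

lemma is_join_cls_gdisj: "is_join (lind T) (lind_le T) (cls T ` \<Phi>) (cls T (gdisj \<Phi>))"
  unfolding is_join_def lind_def
  by (auto simp: lind_le_cls_iff intro: derives.disjI derives.disjE)

lemma is_meet_cls_gconj: "is_meet (lind T) (lind_le T) {cls T \<phi>, cls T \<psi>} (cls T (gconj \<phi> \<psi>))"
  unfolding is_meet_def lind_def
  by (auto simp: lind_le_cls_iff intro: derives.conjE1 derives.conjE2 derives.conjI)

lemma finite_subset_lind_has_conj:
  assumes "finite S" and "S \<subseteq> lind T"
  shows "\<exists>\<phi>. \<forall>T' \<theta>. T \<subseteq> T' \<longrightarrow>
           (derives T' \<theta> \<phi> \<longleftrightarrow> (\<forall>a\<in>S. (cls T \<theta>, a) \<in> derives_rel T T'))"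
  using assms
proof (induction S rule: finite_induct)
  case empty
  show ?case by (blast intro: derives.trueI)
next
  case (insert s S)
  then obtain \<phi> where \<phi>: "\<forall>T' \<theta>. T \<subseteq> T' \<longrightarrow>
      (derives T' \<theta> \<phi> \<longleftrightarrow> (\<forall>a\<in>S. (cls T \<theta>, a) \<in> derives_rel T T'))"
    by auto
  obtain \<psi> where "s = cls T \<psi>" using insert.prems by (auto simp: lind_def)
  then have "\<forall>T' \<theta>. T \<subseteq> T' \<longrightarrow>
      (derives T' \<theta> (gconj \<psi> \<phi>) \<longleftrightarrow> (\<forall>a\<in>insert s S. (cls T \<theta>, a) \<in> derives_rel T T'))"
    using \<phi> by (simp add: derives_gconj_iff derives_rel_cls_iff)
  then show ?case by blast
qed

lemma finite_subset_lind_has_meet: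
  assumes "finite S" and "S \<subseteq> lind T" and "T \<subseteq> T'"
  obtains \<phi> where "is_meet (lind T) (lind_le T) S (cls T \<phi>)"
    and "\<And>\<theta>. (\<forall>a\<in>S. (cls T \<theta>, a) \<in> derives_rel T T') \<Longrightarrow> derives T' \<theta> \<phi>"
proof -
  obtain \<phi> where \<phi>: "\<And>T' \<theta>. T \<subseteq> T' \<Longrightarrow>
      derives T' \<theta> \<phi> \<longleftrightarrow> (\<forall>a\<in>S. (cls T \<theta>, a) \<in> derives_rel T T')"
    using finite_subset_lind_has_conj[OF assms(1,2)] by blast
  have "is_meet (lind T) (lind_le T) S (cls T \<phi>)"
    unfolding is_meet_def
  proof (intro HOL.conjI ballI impI)
    show "cls T \<phi> \<in> lind T" by (simp add: lind_def)
    show "(cls T \<phi>, a) \<in> lind_le T" if "a \<in> S" for a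
      using \<phi>[of T \<phi>] that by (simp add: derives.refl lind_le_eq_derives_rel)
    show "(u, cls T \<phi>) \<in> lind_le T"
      if u: "u \<in> lind T" and lower: "\<forall>a\<in>S. (u, a) \<in> lind_le T" for u
    proof -
      obtain \<theta> where "u = cls T \<theta>" using u by (auto simp: lind_def)
      then show ?thesis
        using \<phi>[of T \<theta>] lower by (simp add: lind_le_eq_derives_rel derives_rel_cls_iff)
    qed
  qed
  then show thesis using that \<phi>[OF assms(3)] by blast
qed

lemma derives_rel_join_closed:
  assumes "T \<subseteq> T'" and "S \<subseteq> lind T" and "b \<in> lind T"
    and "is_join (lind T) (lind_le T) S j" and "\<forall>a\<in>S. (a, b) \<in> derives_rel T T'"
  shows "(j, b) \<in> derives_rel T T'"
proof -
  define \<Phi> where "\<Phi> = \<Union>S"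
  have S: "S = cls T ` \<Phi>" unfolding \<Phi>_def by (rule subset_lind_eq_image_cls[OF assms(2)])
  obtain \<beta> where b: "b = cls T \<beta>" using assms(3) by (auto simp: lind_def)
  have "(j, cls T (gdisj \<Phi>)) \<in> lind_le T"
    using assms(4) is_join_cls_gdisj[of T \<Phi>] unfolding is_join_def S by (simp add: lind_def)
  then have "(j, cls T (gdisj \<Phi>)) \<in> derives_rel T T'"
    using lind_le_subset_derives_rel[OF assms(1)] by blast
  moreover have "derives T' (gdisj \<Phi>) \<beta>"
    using assms(5) unfolding S b by (auto simp: derives_rel_cls_iff[OF assms(1)] intro: derives.disjE)
  then have "(cls T (gdisj \<Phi>), b) \<in> derives_rel T T'"
    unfolding b by (simp add: derives_rel_cls_iff[OF assms(1)])
  ultimately show ?thesis by (rule derives_rel_trans[OF assms(1)])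
qed

lemma derives_rel_meet_closed:
  assumes "T \<subseteq> T'" and "S \<subseteq> lind T" and "finite S" and "b \<in> lind T"
    and "is_meet (lind T) (lind_le T) S m" and "\<forall>a\<in>S. (b, a) \<in> derives_rel T T'"
  shows "(b, m) \<in> derives_rel T T'"
proof -
  obtain \<phi> where meet: "is_meet (lind T) (lind_le T) S (cls T \<phi>)"
    and greatest: "\<And>\<theta>. (\<forall>a\<in>S. (cls T \<theta>, a) \<in> derives_rel T T') \<Longrightarrow> derives T' \<theta> \<phi>"
    using finite_subset_lind_has_meet[OF assms(3,2,1)] by blast
  obtain \<beta> where b: "b = cls T \<beta>" using assms(4) by (auto simp: lind_def)
  have "(b, cls T \<phi>) \<in> derives_rel T T'"
    using greatest assms(6) unfolding b by (simp add: derives_rel_cls_iff[OF assms(1)])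
  moreover have "(cls T \<phi>, m) \<in> lind_le T"
    using meet assms(5) unfolding is_meet_def by blast
  then have "(cls T \<phi>, m) \<in> derives_rel T T'"
    using lind_le_subset_derives_rel[OF assms(1)] by blast
  ultimately show ?thesis by (rule derives_rel_trans[OF assms(1)])
qed

lemma cong_preorder_derives_rel:
  assumes "T \<subseteq> T'"
  shows "cong_preorder (lind T) (lind_le T) (derives_rel T T')"
  unfolding cong_preorder_def
proof (intro HOL.conjI allI impI)
  show "derives_rel T T' \<subseteq> lind T \<times> lind T" "\<forall>a\<in>lind T. (a, a) \<in> derives_rel T T'"
    "trans (derives_rel T T')"
    using preorder_on_derives_rel[OF assms] by (simp_all add: preorder_on_def refl_on_def)
  show "lind_le T \<subseteq> derives_rel T T'"
    by (rule lind_le_subset_derives_rel[OF assms])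
qed (elim conjE, rule derives_rel_join_closed[OF assms] derives_rel_meet_closed[OF assms],
     assumption+)+

lemma derives_imp_cls_in_cong_preorder:
  assumes cong: "cong_preorder (lind T) (lind_le T) P"
    and axioms: "{(cls T \<phi>, cls T \<psi>) | \<phi> \<psi>. (\<phi>, \<psi>) \<in> T'} \<subseteq> P"
    and "derives T' \<phi> \<psi>"
  shows "(cls T \<phi>, cls T \<psi>) \<in> P"
  using assms(3)
proof (induction rule: derives.induct)
  case (ax \<phi> \<psi>)
  then show ?case using axioms by blast
next
  case (refl \<phi>)
  show ?case by (rule cong_preorder_refl[OF cong]) (simp add: lind_def)
next
  case (cut \<phi> \<psi> \<chi>)
  then show ?case by (blast intro: cong_preorder_trans[OF cong])
next
  case (conjE1 \<phi> \<psi>)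
  show ?case by (rule cong_preorder_le[OF cong]) (simp add: lind_le_cls_iff derives.conjE1)
next
  case (conjE2 \<phi> \<psi>)
  show ?case by (rule cong_preorder_le[OF cong]) (simp add: lind_le_cls_iff derives.conjE2)
next
  case (conjI \<theta> \<phi> \<psi>)
  show ?case
  proof (rule cong_preorder_meet[OF cong _ _ _ is_meet_cls_gconj])
    show "{cls T \<phi>, cls T \<psi>} \<subseteq> lind T" "cls T \<theta> \<in> lind T" by (simp_all add: lind_def)
  qed (use conjI.IH in auto)
next
  case (trueI \<phi>)
  show ?case by (rule cong_preorder_le[OF cong]) (simp add: lind_le_cls_iff derives.trueI)
next
  case (disjE \<Phi> \<psi>)
  show ?case
  proof (rule cong_preorder_join[OF cong _ _ is_join_cls_gdisj])
    show "cls T ` \<Phi> \<subseteq> lind T" "cls T \<psi> \<in> lind T" by (auto simp: lind_def)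
  qed (use disjE.IH in auto)
next
  case (disjI \<phi> \<Phi>)
  show ?case by (rule cong_preorder_le[OF cong]) (simp add: lind_le_cls_iff derives.disjI[OF disjI])
qed

lemma least_cong_preorder_eq_derives_rel:
  assumes "T \<subseteq> T'"
  shows "least_cong_preorder (lind T) (lind_le T) {(cls T \<phi>, cls T \<psi>) | \<phi> \<psi>. (\<phi>, \<psi>) \<in> T'}
           = derives_rel T T'"
    (is "least_cong_preorder _ _ ?R = _")
proof (rule antisym)
  have "?R \<subseteq> derives_rel T T'" by (auto simp: derives_rel_def intro: derives.ax)
  then show "least_cong_preorder (lind T) (lind_le T) ?R \<subseteq> derives_rel T T'"
    unfolding least_cong_preorder_def using cong_preorder_derives_rel[OF assms] by blast
  show "derives_rel T T' \<subseteq> least_cong_preorder (lind T) (lind_le T) ?R"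
    unfolding least_cong_preorder_def derives_rel_def
    using derives_imp_cls_in_cong_preorder by blast
qed

lemma order_iso_lind_pre_quot_derives_rel:
  assumes "T \<subseteq> T'"
  shows "order_iso (lind T') (lind_le T')
           (pre_quot (lind T) (derives_rel T T')) (pre_quot_le (lind T) (derives_rel T T'))"
proof (rule order_iso_of_common_presentation)
  let ?q = "\<lambda>\<phi>. pre_class (lind T) (derives_rel T T') (cls T \<phi>)"
  have pre: "preorder_on (lind T) (derives_rel T T')" and cls: "\<And>\<phi>. cls T \<phi> \<in> lind T"
    using preorder_on_derives_rel[OF assms] by (simp_all add: lind_def)
  show "lind T' = range (cls T')" by (simp add: lind_def)
  show "pre_quot (lind T) (derives_rel T T') = range ?q"
    by (simp add: pre_quot_def lind_def image_image)
  show "(cls T' \<phi>, cls T' \<psi>) \<in> lind_le T' \<longleftrightarrow> (?q \<phi>, ?q \<psi>) \<in> pre_quot_le (lind T) (derives_rel T T')"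
    for \<phi> \<psi>
    by (simp add: lind_le_cls_iff pre_quot_le_iff[OF pre cls cls] derives_rel_cls_iff[OF assms])
  show "cls T' \<phi> = cls T' \<psi> \<longleftrightarrow> ?q \<phi> = ?q \<psi>" for \<phi> \<psi>
    by (simp add: cls_eq_iff pre_class_eq_iff[OF pre cls cls] derives_rel_cls_iff[OF assms])
qed

theorem mainTheorem14:
  fixes T U :: "'a gtheory"
  defines "R \<equiv> {(cls T \<phi>, cls T \<psi>) | \<phi> \<psi>. (\<phi>, \<psi>) \<in> T \<union> U}"
  defines "Rbar \<equiv> least_cong_preorder (lind T) (lind_le T) R"
  shows "order_iso (lind (T \<union> U)) (lind_le (T \<union> U))
                   (pre_quot (lind T) Rbar) (pre_quot_le (lind T) Rbar)"
proof -
  have "Rbar = derives_rel T (T \<union> U)"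
    unfolding Rbar_def R_def by (rule least_cong_preorder_eq_derives_rel) simp
  then show ?thesis using order_iso_lind_pre_quot_derives_rel[of T "T \<union> U"] by simp
qed

end
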